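(* Let $P_{2m}(\boldsymbol\lambda)$ be a parallel Eulerian graph with $m\ge1$, and let all edges have activation probability $p\in(0,1]$. Then for every edge $e$, the expected time for the uniform Eulerian strategy to traverse $e$ equals $$\frac{\theta(P_{2m}(\boldsymbol\lambda))+p^{-1}}{2}+\Phi_m.$$ Consequently, $\mathrm{val}(p)\le \frac{\theta(P_{2m}(\boldsymbol\lambda))+p^{-1}}{2}+\Phi_m$.
   Context: Setting: the stochastic search game. Every edge has length $1$ and is active at each stage independently with probability $p$. The hider chooses an edge and stays there. The searcher starts at the root; at each stage, knowing which edges are currently active, she waits or traverses an active edge incident to her position. The hider's payoff is the expected first time the searcher traverses his edge. $\mathrm{val}(p)$ is the value. Parallel graph $P_n(\boldsymbol\lambda)$, with $\boldsymbol\lambda=(\lambda_1,\dots,\lambda_n)$ positive integers: two vertices $O$ (the root) and $D$ joined by $n$ internally vertex-disjoint paths, the $i$-th having $\lambda_i$ edges. When $n=2m$ is even it is Eulerian, and is called a parallel Eulerian graph. Uniform Eulerian strategy: - at $O$ (respectively $D$), wait until at least one untraversed path edge incident to the current vertex is active, then choose uniformly among those active untraversed edges; - then follow the chosen path straight to the other endpoint, waiting whenever the next edge is inactive; - repeat until all edges are traversed. Cycle time: $\theta(P_{2m}(\boldsymbol\lambda))=\sum_{k=1}^{2m}\Big(\frac1{1-(1-p)^k}+\frac{\lambda_k-1}{p}\Big)$. $\Phi_m$ is defined recursively by $\Phi_1=\frac12\big(\frac1{1-(1-p)^2}-\frac1p\big)$ and, for $m>1$, $$\Phi_m=\frac12\frac1{1-(1-p)^{2m}}+\Big(\frac12-\frac1{2m}\Big)\frac1{1-(1-p)^{2m-1}}-\frac1{2m}\Big(\sum_{k=1}^{2(m-1)}\frac1{1-(1-p)^k}+\frac1p\Big)+\frac{m-1}{m}\Phi_{m-1}.$$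 *)

theory Defs
  imports "HOL-Probability.Probability"
begin

(* Parallel graph P_{2m}(lam): paths indexed i < 2*m, path i has lam i edges.
   Edge (i,j), 1 <= j <= lam i, is the j-th edge of path i counted from O. *)

datatype pvertex = VO | VD | Mid nat nat

type_synonym edge = "nat \<times> nat"
type_synonym activation = "edge \<Rightarrow> bool"
(* configuration: current position, set of already traversed edges,
   history of (position, activation pattern, move made) at all past stages *)
type_synonym config = "pvertex \<times> edge set \<times> (pvertex \<times> activation \<times> edge option) list"
(* a (behavioural, possibly randomised) searcher strategy: given everything observed so far
   and the current activation pattern, a distribution over moves (None = wait) *)
type_synonym strategy = "config \<Rightarrow> activation \<Rightarrow> edge option pmf"

definition pedges :: "(nat \<Rightarrow> nat) \<Rightarrow> nat \<Rightarrow> edge set" where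
  "pedges lam m = {(i, j). i < 2 * m \<and> 1 \<le> j \<and> j \<le> lam i}"

definition vtx :: "(nat \<Rightarrow> nat) \<Rightarrow> nat \<Rightarrow> nat \<Rightarrow> pvertex" where
  "vtx lam i j = (if j = 0 then VO else if j = lam i then VD else Mid i j)"

definition end1 :: "(nat \<Rightarrow> nat) \<Rightarrow> edge \<Rightarrow> pvertex" where
  "end1 lam e = vtx lam (fst e) (snd e - 1)"

definition end2 :: "(nat \<Rightarrow> nat) \<Rightarrow> edge \<Rightarrow> pvertex" where
  "end2 lam e = vtx lam (fst e) (snd e)"

definition incident :: "(nat \<Rightarrow> nat) \<Rightarrow> edge \<Rightarrow> pvertex \<Rightarrow> bool" where
  "incident lam e v \<longleftrightarrow> v = end1 lam e \<or> v = end2 lam e"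

definition other_end :: "(nat \<Rightarrow> nat) \<Rightarrow> edge \<Rightarrow> pvertex \<Rightarrow> pvertex" where
  "other_end lam e v = (if v = end1 lam e then end2 lam e else end1 lam e)"

definition activation_pmf :: "(nat \<Rightarrow> nat) \<Rightarrow> nat \<Rightarrow> real \<Rightarrow> activation pmf" where
  "activation_pmf lam m p = Pi_pmf (pedges lam m) False (\<lambda>_. bernoulli_pmf p)"

definition stage :: "(nat \<Rightarrow> nat) \<Rightarrow> nat \<Rightarrow> real \<Rightarrow> strategy \<Rightarrow> config \<Rightarrow> config pmf" where
  "stage lam m p \<sigma> c =
     (case c of (pos, trav, hist) \<Rightarrow>
       do { a \<leftarrow> activation_pmf lam m p;
            mv \<leftarrow> \<sigma> c a;
            return_pmf
              (case mv of
                 Some e \<Rightarrow>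
                   if e \<in> pedges lam m \<and> a e \<and> incident lam e pos
                   then (other_end lam e pos, insert e trav, hist @ [(pos, a, Some e)])
                   else (pos, trav, hist @ [(pos, a, None)])
               | None \<Rightarrow> (pos, trav, hist @ [(pos, a, None)])) })"

definition config_dist :: "(nat \<Rightarrow> nat) \<Rightarrow> nat \<Rightarrow> real \<Rightarrow> strategy \<Rightarrow> nat \<Rightarrow> config pmf" where
  "config_dist lam m p \<sigma> t = ((\<lambda>d. bind_pmf d (stage lam m p \<sigma>)) ^^ t) (return_pmf (VO, {}, []))"

(* expected first time edge e is traversed: E[T] = sum_{t>=0} P(T > t) (may be infinite) *)
definition search_time :: "(nat \<Rightarrow> nat) \<Rightarrow> nat \<Rightarrow> real \<Rightarrow> strategy \<Rightarrow> edge \<Rightarrow> ennreal" where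
  "search_time lam m p \<sigma> e =
     (\<Sum>t. ennreal (measure_pmf.prob (config_dist lam m p \<sigma> t) {c. e \<notin> fst (snd c)}))"

definition game_val :: "(nat \<Rightarrow> nat) \<Rightarrow> nat \<Rightarrow> real \<Rightarrow> ennreal" where
  "game_val lam m p = (INF \<sigma>. SUP e \<in> pedges lam m. search_time lam m p \<sigma> e)"

(* At an internal vertex of a path there is only one untraversed incident edge (the next
   edge of the path), so this is "follow the path straight, waiting when inactive". *)
definition uniform_eulerian :: "(nat \<Rightarrow> nat) \<Rightarrow> nat \<Rightarrow> strategy" where
  "uniform_eulerian lam m c a =
     (case c of (pos, trav, hist) \<Rightarrow>
       (let A = {e \<in> pedges lam m. a e \<and> e \<notin> trav \<and> incident lam e pos}
        in if A = {} then return_pmf None else map_pmf Some (pmf_of_set A)))"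

definition theta :: "(nat \<Rightarrow> nat) \<Rightarrow> nat \<Rightarrow> real \<Rightarrow> real" where
  "theta lam m p = (\<Sum>k<2 * m. 1 / (1 - (1 - p) ^ (k + 1)) + (real (lam k) - 1) / p)"

fun Phi :: "real \<Rightarrow> nat \<Rightarrow> real" where
  "Phi p 0 = 0"
| "Phi p (Suc 0) = 1/2 * (1 / (1 - (1 - p)^2) - 1 / p)"
| "Phi p (Suc (Suc k)) =
     (let m = Suc (Suc k) in
        1/2 * (1 / (1 - (1 - p) ^ (2 * m)))
      + (1/2 - 1 / (2 * real m)) * (1 / (1 - (1 - p) ^ (2 * m - 1)))
      - 1 / (2 * real m) * ((\<Sum>j = 1..2 * (m - 1). 1 / (1 - (1 - p) ^ j)) + 1 / p)
      + (real m - 1) / real m * Phi p (Suc k))"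

end

theory Submission
  imports Defs "HOL-Combinatorics.Transposition"
begin

text \<open>
  The uniform Eulerian strategy looks only at its position and at the set of traversed edges, so
  the game projects onto a finite Markov chain on such reduced states. Fix the hidden edge in
  path i0. From an endpoint with k untraversed paths the searcher first waits
  1 / (1 - (1 - p)^k) for an active edge; the untraversed paths are then taken in uniformly
  random order, alternately from the two endpoints, so path i0 is entered from the current
  endpoint with probability ceil(k/2)/k, every other path taken before it costs its interior walk
  (lam i - 1)/p with probability 1/2, and inside a path each edge costs 1/p. This gives an
  explicit potential on reachable states which decreases by exactly one in expectation per stage
  until the hidden edge is traversed; hence the expected search time equals the potential at the
  root, which evaluates to (theta + 1/p)/2 + Phi m.
\<close>

section \<open>Uniform choice among active edges\<close>

lemma expectation_Pi_bernoulli_none_active: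
  fixes p :: real
  assumes "finite I" and "E \<subseteq> I" and "0 \<le> p" and "p \<le> 1"
  shows "measure_pmf.expectation (Pi_pmf I False (\<lambda>_. bernoulli_pmf p))
           (\<lambda>a. if {z\<in>E. a z} = {} then 1 else 0) = (1 - p) ^ card E"
proof -
  have indicator_as_prod: "(if {z\<in>E. a z} = {} then 1 else 0)
      = (\<Prod>z\<in>I. if z \<in> E \<and> a z then 0 else 1 :: real)"
    for a :: "'a \<Rightarrow> bool"
    using assms(1,2) by (auto simp: prod_zero_iff intro!: prod.neutral)
  have "measure_pmf.expectation (Pi_pmf I False (\<lambda>_. bernoulli_pmf p))
          (\<lambda>a. \<Prod>z\<in>I. if z \<in> E \<and> a z then 0 else 1 :: real)
        = (\<Prod>z\<in>I. measure_pmf.expectation (bernoulli_pmf p) (\<lambda>v. if z \<in> E \<and> v then 0 else 1 :: real))"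
    by (rule expectation_prod_Pi_pmf) (simp_all add: assms(1) integrable_measure_pmf_finite)
  also have "\<dots> = (\<Prod>z\<in>I. if z \<in> E then 1 - p else 1)"
    using assms(3,4) by (intro prod.cong) (auto simp: integral_bernoulli_pmf)
  also have "\<dots> = (1 - p) ^ card E"
    using assms(1,2) by (simp add: prod.If_cases Int_absorb1)
  finally show ?thesis by (simp only: indicator_as_prod)
qed

lemma expectation_Pi_bernoulli_share_swap:
  fixes p :: real
  assumes "finite I" and "E \<subseteq> I" and "x \<in> E" and "y \<in> E"
  shows "measure_pmf.expectation (Pi_pmf I False (\<lambda>_. bernoulli_pmf p))
           (\<lambda>a. if a x then 1 / real (card {z\<in>E. a z}) else 0)
       = measure_pmf.expectation (Pi_pmf I False (\<lambda>_. bernoulli_pmf p))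
           (\<lambda>a. if a y then 1 / real (card {z\<in>E. a z}) else 0)"
proof -
  let ?D = "Pi_pmf I False (\<lambda>_. bernoulli_pmf p)" and ?\<tau> = "Transposition.transpose x y"
  have "bij_betw ?\<tau> I I"
    using assms by (intro bij_betw_transpose_iff) auto
  then have "?D = map_pmf (\<lambda>a. a \<circ> ?\<tau>) ?D"
    using assms by (intro Pi_pmf_bij_betw) (auto simp: Transposition.transpose_def)
  then have "measure_pmf.expectation ?D (\<lambda>a. if a y then 1 / real (card {z\<in>E. a z}) else 0)
      = measure_pmf.expectation ?D (\<lambda>a. if (a \<circ> ?\<tau>) y then 1 / real (card {z\<in>E. (a \<circ> ?\<tau>) z}) else 0)"
    by (rule ssubst) (rule integral_map_pmf)
  also have "\<dots> = measure_pmf.expectation ?D (\<lambda>a. if a x then 1 / real (card {z\<in>E. a z}) else 0)"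
  proof (intro Bochner_Integration.integral_cong refl)
    fix a :: "'a \<Rightarrow> bool"
    have "{z\<in>E. (a \<circ> ?\<tau>) z} = ?\<tau> ` {z\<in>E. a z}"
      using assms(3,4)
      by (auto simp: in_transpose_image_iff Transposition.transpose_def split: if_splits)
    then have "card {z\<in>E. (a \<circ> ?\<tau>) z} = card {z\<in>E. a z}"
      by (metis card_image inj_on_transpose)
    then show "(if (a \<circ> ?\<tau>) y then 1 / real (card {z\<in>E. (a \<circ> ?\<tau>) z}) else 0)
        = (if a x then 1 / real (card {z\<in>E. a z}) else 0)"
      by simp
  qed
  finally show ?thesis ..
qed

lemma expectation_Pi_bernoulli_uniform_choice:
  fixes p c :: real and f :: "'a \<Rightarrow> real"
  assumes fin: "finite I" and EI: "E \<subseteq> I" and "E \<noteq> {}" and p: "0 \<le> p" "p \<le> 1"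
  shows "measure_pmf.expectation (Pi_pmf I False (\<lambda>_. bernoulli_pmf p))
     (\<lambda>a. if {z\<in>E. a z} = {} then c else (\<Sum>z\<in>{z\<in>E. a z}. f z) / real (card {z\<in>E. a z}))
   = (1 - p) ^ card E * c + (1 - (1 - p) ^ card E) / real (card E) * (\<Sum>z\<in>E. f z)"
proof -
  let ?D = "Pi_pmf I False (\<lambda>_. bernoulli_pmf p)"
  define none where "none a = (if {z\<in>E. a z} = {} then 1 else 0 :: real)" for a :: "'a \<Rightarrow> bool"
  define share where "share z a = (if a z then 1 / real (card {z\<in>E. a z}) else 0)" for z a
  obtain z0 where z0: "z0 \<in> E" using assms(3) by blast
  have finE: "finite E" using fin EI finite_subset by blast
  have int_none: "integrable ?D none"
    by (rule measure_pmf.integrable_const_bound[where B=1]) (auto simp: none_def)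
  have int_share: "integrable ?D (share z)" if "z \<in> E" for z
  proof (rule measure_pmf.integrable_const_bound[where B=1])
    have "norm (share z a) \<le> 1" for a
    proof (cases "a z")
      case True
      then have "card {z\<in>E. a z} \<ge> 1"
        using \<open>z \<in> E\<close> finE by (auto simp: Suc_le_eq card_gt_0_iff)
      then show ?thesis
        by (simp add: share_def True)
    qed (simp add: share_def)
    then show "AE a in ?D. norm (share z a) \<le> 1"
      by simp
  qed simp
  have shares_sum: "(\<Sum>z\<in>E. share z a) = 1 - none a" for a
  proof -
    have "(\<Sum>z\<in>E. share z a) = (\<Sum>z\<in>{z\<in>E. a z}. 1 / real (card {z\<in>E. a z}))"
      unfolding share_def using finE by (simp add: sum.inter_filter[symmetric])
    then show ?thesis
      using finE by (simp add: none_def)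
  qed
  have share_eq: "measure_pmf.expectation ?D (share z) = measure_pmf.expectation ?D (share z0)"
    if "z \<in> E" for z
    unfolding share_def by (rule expectation_Pi_bernoulli_share_swap[OF fin EI that z0])
  have E_none: "measure_pmf.expectation ?D none = (1 - p) ^ card E"
    unfolding none_def by (rule expectation_Pi_bernoulli_none_active[OF fin EI p])
  have E_one: "measure_pmf.expectation ?D (\<lambda>_. 1) = (1::real)"
    by (simp add: prob_space.prob_space measure_pmf.prob_space_axioms)
  have "real (card E) * measure_pmf.expectation ?D (share z0)
      = (\<Sum>z\<in>E. measure_pmf.expectation ?D (share z))"
    using share_eq by (simp add: sum.cong[of E E, OF refl share_eq])
  also have "\<dots> = measure_pmf.expectation ?D (\<lambda>a. \<Sum>z\<in>E. share z a)"
    by (rule Bochner_Integration.integral_sum[symmetric]) (rule int_share)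
  also have "\<dots> = measure_pmf.expectation ?D (\<lambda>a. 1 - none a)"
    by (simp only: shares_sum)
  also have "\<dots> = 1 - (1 - p) ^ card E"
    using int_none by (simp add: Bochner_Integration.integral_diff E_none E_one)
  finally have E_share: "measure_pmf.expectation ?D (share z0) = (1 - (1 - p) ^ card E) / real (card E)"
    using finE assms(3) by (simp add: field_simps)
  have integrand: "(if {z\<in>E. a z} = {} then c else (\<Sum>z\<in>{z\<in>E. a z}. f z) / real (card {z\<in>E. a z}))
      = c * none a + (\<Sum>z\<in>E. f z * share z a)" for a
  proof (cases "{z\<in>E. a z} = {}")
    case True
    then have "share z a = 0" if "z \<in> E" for z
      using that by (auto simp: share_def)
    with True show ?thesis
      by (simp add: none_def)
  next
    case False
    have "(\<Sum>z\<in>E. f z * share z a) = (\<Sum>z\<in>{z\<in>E. a z}. f z / real (card {z\<in>E. a z}))"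
      unfolding share_def using finE
      by (simp add: sum.inter_filter[symmetric] if_distrib cong: if_cong)
    moreover have "none a = 0"
      using False by (simp add: none_def)
    ultimately show ?thesis
      by (simp only: if_not_P[OF False]) (simp add: sum_divide_distrib)
  qed
  have "measure_pmf.expectation ?D (\<lambda>a. c * none a + (\<Sum>z\<in>E. f z * share z a))
      = c * (1 - p) ^ card E + (\<Sum>z\<in>E. f z * measure_pmf.expectation ?D (share z))"
    using int_none int_share
    by (simp add: Bochner_Integration.integral_add Bochner_Integration.integral_sum E_none)
  also have "\<dots> = (1 - p) ^ card E * c + (1 - (1 - p) ^ card E) / real (card E) * (\<Sum>z\<in>E. f z)"
    using share_eq E_share by (simp add: sum_distrib_right sum_divide_distrib mult.commute)
  finally show ?thesis by (simp only: integrand)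
qed

section \<open>Expected hitting times from a potential\<close>

lemma suminf_emeasure_iterate_bind_eq_potential:
  fixes K :: "'a \<Rightarrow> 'a pmf" and f :: "'a \<Rightarrow> ennreal" and B :: real
  assumes closed: "\<And>s. s \<in> S \<Longrightarrow> set_pmf (K s) \<subseteq> S"
    and start: "set_pmf d0 \<subseteq> S"
    and drift: "\<And>s. s \<in> S \<Longrightarrow> (\<integral>\<^sup>+x. f x \<partial>K s) + indicator P s = f s"
    and bound: "\<And>s. s \<in> S \<Longrightarrow> f s \<le> ennreal B * indicator P s"
  shows "(\<Sum>t. emeasure (((\<lambda>d. bind_pmf d K) ^^ t) d0) P) = (\<integral>\<^sup>+x. f x \<partial>d0)"
proof -
  define D where "D t = ((\<lambda>d. bind_pmf d K) ^^ t) d0" for t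
  define E where "E t = (\<integral>\<^sup>+x. f x \<partial>D t)" for t
  define r where "r t = measure_pmf.prob (D t) P" for t
  have r_nonneg: "0 \<le> r t" for t
    by (simp add: r_def)
  have D_Suc: "D (Suc t) = bind_pmf (D t) K" for t
    by (simp add: D_def)
  have D_support: "set_pmf (D t) \<subseteq> S" for t
  proof (induction t)
    case 0
    then show ?case using start by (simp add: D_def)
  next
    case (Suc t)
    then show ?case using closed by (auto simp: D_Suc)
  qed
  have E_step: "E (Suc t) + ennreal (r t) = E t" for t
  proof -
    have "E (Suc t) + ennreal (r t)
        = (\<integral>\<^sup>+x. (\<integral>\<^sup>+y. f y \<partial>K x) + indicator P x \<partial>D t)"
      by (simp add: E_def r_def D_Suc nn_integral_add measure_pmf.emeasure_eq_measure)
    also have "\<dots> = E t"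
      unfolding E_def using D_support drift
      by (intro nn_integral_cong_AE) (auto simp: AE_measure_pmf_iff)
    finally show ?thesis .
  qed
  have partial_sum: "(\<Sum>t<N. ennreal (r t)) + E N = E 0" for N
  proof (induction N)
    case (Suc N)
    then show ?case
      using E_step[of N] by (simp add: add.assoc add.commute[of "ennreal (r N)"])
  qed simp
  have E_le: "E N \<le> ennreal B * ennreal (r N)" for N
  proof -
    have "E N \<le> (\<integral>\<^sup>+x. ennreal B * indicator P x \<partial>D N)"
      unfolding E_def using D_support bound
      by (intro nn_integral_mono_AE) (auto simp: AE_measure_pmf_iff)
    then show ?thesis
      by (simp add: nn_integral_cmult_indicator r_def measure_pmf.emeasure_eq_measure)
  qed
  have sum_le: "(\<Sum>t. ennreal (r t)) \<le> E 0"
    using ennreal_suminf_bound_add[of "\<lambda>t. ennreal (r t)" 0 "E 0"] partial_sum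
    by (metis add.right_neutral le_iff_add)
  have "E 0 \<le> ennreal B * ennreal (r 0)"
    by (rule E_le)
  also have "\<dots> \<le> ennreal B * 1"
    by (rule mult_left_mono) (simp_all add: r_def)
  finally have "(\<Sum>t. ennreal (r t)) \<noteq> top"
    using sum_le by (metis ennreal_neq_top mult.right_neutral order_trans top_unique)
  then have "summable r"
    by (rule summable_suminf_not_top[OF r_nonneg])
  then have "r \<longlonglongrightarrow> 0"
    by (rule summable_LIMSEQ_zero)
  then have "(\<lambda>N. ennreal (r N)) \<longlonglongrightarrow> 0"
    by (simp add: ennreal_tendsto_0_iff r_nonneg)
  then have "(\<lambda>N. (\<Sum>t. ennreal (r t)) + ennreal B * ennreal (r N))
      \<longlonglongrightarrow> (\<Sum>t. ennreal (r t)) + ennreal B * 0"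
    by (intro tendsto_add tendsto_const ennreal_tendsto_cmult) simp_all
  moreover have "E 0 \<le> (\<Sum>t. ennreal (r t)) + ennreal B * ennreal (r N)" for N
  proof -
    have "E 0 = (\<Sum>t<N. ennreal (r t)) + E N"
      by (rule partial_sum[symmetric])
    also have "\<dots> \<le> (\<Sum>t. ennreal (r t)) + ennreal B * ennreal (r N)"
      by (intro add_mono E_le sum_le_suminf) auto
    finally show ?thesis .
  qed
  ultimately have "E 0 \<le> (\<Sum>t. ennreal (r t))"
    by (intro LIMSEQ_le_const) auto
  with sum_le show ?thesis
    by (simp add: E_def D_def r_def measure_pmf.emeasure_eq_measure)
qed

text \<open>
  Expected total waiting time at endpoints until the target path is entered, when \<open>k\<close> paths
  including the target path are untraversed.
\<close>
fun endpoint_wait :: "real \<Rightarrow> nat \<Rightarrow> real" where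
  "endpoint_wait p 0 = 0"
| "endpoint_wait p (Suc k) = 1 / (1 - (1 - p) ^ Suc k) + real k / real (Suc k) * endpoint_wait p k"

lemma endpoint_wait_eq_Phi:
  "endpoint_wait p (2 * Suc n) = ((\<Sum>j<2 * Suc n. 1 / (1 - (1 - p) ^ (j + 1))) + 1 / p) / 2 + Phi p (Suc n)"
proof (induction n)
  case 0
  show ?case
    by (simp add: numeral_2_eq_2 field_simps)
next
  case (Suc n)
  define k where "k = 2 * Suc n"
  define T where "T = (\<Sum>j<k. 1 / (1 - (1 - p) ^ (j + 1)))"
  define A3 where "A3 = 1 / (1 - (1 - p) ^ Suc k)"
  define A4 where "A4 = 1 / (1 - (1 - p) ^ Suc (Suc k))"
  have k: "2 * Suc (Suc n) = Suc (Suc k)"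
    by (simp add: k_def)
  have wait: "endpoint_wait p (Suc (Suc k))
      = A4 + real (Suc k) / real (Suc (Suc k)) * A3 + real k / real (Suc (Suc k)) * endpoint_wait p k"
  proof -
    have coeff: "real (Suc k) / real (Suc (Suc k)) * (real k / real (Suc k)) = real k / real (Suc (Suc k))"
      by (simp del: of_nat_Suc)
    show ?thesis
      by (simp only: endpoint_wait.simps A3_def[symmetric] A4_def[symmetric] distrib_left
          mult.assoc[symmetric] coeff add.assoc)
  qed
  have sum: "(\<Sum>j<Suc (Suc k). 1 / (1 - (1 - p) ^ (j + 1))) = T + A3 + A4"
    by (simp add: T_def A3_def A4_def)
  have Phi: "Phi p (Suc (Suc n)) = 1/2 * A4 + (1/2 - 1 / (2 * real (Suc (Suc n)))) * A3
      - 1 / (2 * real (Suc (Suc n))) * (T + 1 / p) + (real (Suc (Suc n)) - 1) / real (Suc (Suc n)) * Phi p (Suc n)"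
  proof -
    have "(\<Sum>j = 1..k. 1 / (1 - (1 - p) ^ j)) = T"
      by (simp add: T_def sum.atLeast1_atMost_eq)
    then show ?thesis
      by (simp only: Phi.simps(3) Let_def k(1) diff_Suc_1 k_def[symmetric] A3_def[symmetric] A4_def[symmetric])
  qed
  define z where "z = 1 / real (Suc (Suc n))"
  have coeffs: "real (Suc k) / real (Suc (Suc k)) = 1 - z / 2" "real k / real (Suc (Suc k)) = 1 - z"
      "1 / (2 * real (Suc (Suc n))) = z / 2" "(real (Suc (Suc n)) - 1) / real (Suc (Suc n)) = 1 - z"
    by (simp_all add: z_def k_def field_simps)
  have "endpoint_wait p (Suc (Suc k)) = ((T + A3 + A4) + 1 / p) / 2 + Phi p (Suc (Suc n))"
    unfolding wait Phi coeffs Suc.IH[folded k_def, folded T_def]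
    by (simp add: algebra_simps diff_divide_distrib add_divide_distrib)
  then show ?case
    unfolding k(1) sum .
qed

section \<open>The reduced chain of the uniform Eulerian strategy\<close>

lemma finite_pedges: "finite (pedges lam m)"
proof -
  have "pedges lam m \<subseteq> (SIGMA i:{..<2*m}. {1..lam i})"
    unfolding pedges_def by auto
  then show ?thesis
    by (rule finite_subset) auto
qed

type_synonym rstate = "pvertex \<times> edge set"

definition open_edges :: "(nat \<Rightarrow> nat) \<Rightarrow> nat \<Rightarrow> rstate \<Rightarrow> edge set" where
  "open_edges lam m s = {e \<in> pedges lam m. e \<notin> snd s \<and> incident lam e (fst s)}"

definition traverse :: "(nat \<Rightarrow> nat) \<Rightarrow> rstate \<Rightarrow> edge \<Rightarrow> rstate" where
  "traverse lam s e = (other_end lam e (fst s), insert e (snd s))"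

definition reduced_step :: "(nat \<Rightarrow> nat) \<Rightarrow> nat \<Rightarrow> real \<Rightarrow> rstate \<Rightarrow> rstate pmf" where
  "reduced_step lam m p s = bind_pmf (activation_pmf lam m p)
     (\<lambda>a. if {e \<in> open_edges lam m s. a e} = {} then return_pmf s
          else map_pmf (traverse lam s) (pmf_of_set {e \<in> open_edges lam m s. a e}))"

definition reduce :: "config \<Rightarrow> rstate" where
  "reduce c = (fst c, fst (snd c))"

lemma finite_open_edges: "finite (open_edges lam m s)"
  unfolding open_edges_def using finite_pedges by auto

text \<open>The strategy ignores the history, so the configuration chain projects onto reduced states.\<close>

lemma map_pmf_reduce_stage:
  "map_pmf reduce (stage lam m p (uniform_eulerian lam m) c) = reduced_step lam m p (reduce c)"
proof -
  obtain pos trav hist where c: "c = (pos, trav, hist)"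
    by (cases c)
  have active: "{e \<in> pedges lam m. a e \<and> e \<notin> trav \<and> incident lam e pos}
      = {e \<in> open_edges lam m (pos, trav). a e}"
    for a :: activation
    by (auto simp: open_edges_def)
  have support: "e \<in> open_edges lam m (pos, trav) \<and> a e"
    if "e \<in> set_pmf (pmf_of_set {e \<in> open_edges lam m (pos, trav). a e})"
      and "{e \<in> open_edges lam m (pos, trav). a e} \<noteq> {}" for a :: activation and e
    using that by (simp add: finite_open_edges)
  show ?thesis
    unfolding c stage_def reduced_step_def uniform_eulerian_def map_bind_pmf Let_def prod.case active
    by (intro bind_pmf_cong refl)
      (auto simp: bind_map_pmf bind_return_pmf map_pmf_def[of "traverse lam _"] reduce_def traverse_def
        intro!: bind_pmf_cong dest!: support simp del: Collect_empty_eq, auto simp: open_edges_def)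
qed

lemma finite_set_pmf_activation: "finite (set_pmf (activation_pmf lam m p))"
proof -
  have "set_pmf (activation_pmf lam m p) \<subseteq> {f. \<forall>x. x \<notin> pedges lam m \<longrightarrow> f x = False}"
    unfolding activation_pmf_def by (rule set_Pi_pmf_subset[OF finite_pedges])
  also have "\<dots> \<subseteq> (\<lambda>S x. x \<in> S) ` Pow (pedges lam m)"
  proof
    fix f :: activation assume "f \<in> {f. \<forall>x. x \<notin> pedges lam m \<longrightarrow> f x = False}"
    hence "f = (\<lambda>x. x \<in> {x \<in> pedges lam m. f x})" by (intro ext) blast
    thus "f \<in> (\<lambda>S x. x \<in> S) ` Pow (pedges lam m)" by blast
  qed
  finally show ?thesis by (rule finite_subset) (simp add: finite_pedges)
qed

lemma set_pmf_reduced_step: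
  "set_pmf (reduced_step lam m p s) \<subseteq> insert s (traverse lam s ` open_edges lam m s)"
  unfolding reduced_step_def using finite_open_edges[of lam m s]
  by (auto split: if_splits simp: set_pmf_of_set)

lemma finite_set_pmf_reduced_step: "finite (set_pmf (reduced_step lam m p s))"
  by (rule finite_subset[OF set_pmf_reduced_step]) (simp add: finite_open_edges)

lemma expectation_reduced_step:
  fixes h :: "rstate \<Rightarrow> real"
  assumes p: "0 \<le> p" "p \<le> 1" and ne: "open_edges lam m s \<noteq> {}"
  shows "measure_pmf.expectation (reduced_step lam m p s) h
    = (1 - p) ^ card (open_edges lam m s) * h s
      + (1 - (1 - p) ^ card (open_edges lam m s)) / real (card (open_edges lam m s)) * (\<Sum>e\<in>open_edges lam m s. h (traverse lam s e))"
proof -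
  define S where "S = set_pmf (activation_pmf lam m p)"
  define N where "N = (\<lambda>a. if {e \<in> open_edges lam m s. a e} = {} then return_pmf s
          else map_pmf (traverse lam s) (pmf_of_set {e \<in> open_edges lam m s. a e}))"
  have finS: "finite S" unfolding S_def by (rule finite_set_pmf_activation)
  have finN: "finite (set_pmf (N a))" for a
    unfolding N_def using finite_open_edges[of lam m s] by (auto simp: set_pmf_of_set)
  have EN: "measure_pmf.expectation (N a) h =
     (if {e \<in> open_edges lam m s. a e} = {} then h s else (\<Sum>e\<in>{e \<in> open_edges lam m s. a e}. h (traverse lam s e)) / real (card {e \<in> open_edges lam m s. a e}))" for a
    unfolding N_def using finite_open_edges[of lam m s] by (auto simp: integral_pmf_of_set)
  have "measure_pmf.expectation (reduced_step lam m p s) h = (\<Sum>a\<in>S. pmf (activation_pmf lam m p) a *\<^sub>R measure_pmf.expectation (N a) h)"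
    unfolding reduced_step_def N_def[symmetric]
    by (rule pmf_expectation_bind[OF finS]) (auto simp: finN S_def)
  also have "\<dots> = measure_pmf.expectation (activation_pmf lam m p) (\<lambda>a. measure_pmf.expectation (N a) h)"
    by (rule integral_measure_pmf[OF finS, symmetric]) (auto simp: S_def)
  also have "\<dots> = measure_pmf.expectation (activation_pmf lam m p)
     (\<lambda>a. if {e \<in> open_edges lam m s. a e} = {} then h s else (\<Sum>e\<in>{e \<in> open_edges lam m s. a e}. h (traverse lam s e)) / real (card {e \<in> open_edges lam m s. a e}))"
    by (simp only: EN)
  also have "\<dots> = (1 - p) ^ card (open_edges lam m s) * h s
      + (1 - (1 - p) ^ card (open_edges lam m s)) / real (card (open_edges lam m s)) * (\<Sum>e\<in>open_edges lam m s. h (traverse lam s e))"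
    unfolding activation_pmf_def
    by (rule expectation_Pi_bernoulli_uniform_choice[OF finite_pedges _ ne p]) (auto simp: open_edges_def)
  finally show ?thesis .
qed

section \<open>Reachable states\<close>

definition opposite :: "pvertex \<Rightarrow> pvertex" where
  "opposite v = (if v = VO then VD else VO)"

locale parallel_graph =
  fixes lam :: "nat \<Rightarrow> nat" and m :: nat
  assumes lam_pos: "\<And>i. i < 2 * m \<Longrightarrow> 0 < lam i"
begin

definition full_paths :: "nat set \<Rightarrow> edge set" where
  "full_paths F = {(i, j). i \<in> F \<and> 1 \<le> j \<and> j \<le> lam i}"

definition segment :: "nat \<Rightarrow> nat \<Rightarrow> nat \<Rightarrow> edge set" where
  "segment i a b = {(i', j). i' = i \<and> a \<le> j \<and> j \<le> b}"

definition end_edge :: "pvertex \<Rightarrow> nat \<Rightarrow> edge" where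
  "end_edge v i = (i, if v = VO then 1 else lam i)"

text \<open>
  Reachable reduced states: at an endpoint after traversing exactly the paths in \<open>F\<close>, or at the
  \<open>t\<close>-th interior vertex of path \<open>i\<close>, having entered it from \<open>VO\<close> or from \<open>VD\<close>.
\<close>
definition tour_state :: "rstate \<Rightarrow> bool" where
  "tour_state s \<longleftrightarrow> (\<exists>F \<subseteq> {..<2*m}.
      (\<exists>v \<in> {VO, VD}. s = (v, full_paths F)) \<or>
      (\<exists>i t. i < 2*m \<and> i \<notin> F \<and> 1 \<le> t \<and> t < lam i \<and>
         (s = (Mid i t, full_paths F \<union> segment i 1 t) \<or>
          s = (Mid i t, full_paths F \<union> segment i (t+1) (lam i)))))"

lemma incident_VO: "e \<in> pedges lam m \<Longrightarrow> incident lam e VO \<longleftrightarrow> snd e = 1"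
  by (cases e) (auto simp: incident_def end1_def end2_def vtx_def pedges_def)

lemma incident_VD: "e \<in> pedges lam m \<Longrightarrow> incident lam e VD \<longleftrightarrow> snd e = lam (fst e)"
  by (cases e) (auto simp: incident_def end1_def end2_def vtx_def pedges_def)

lemma incident_Mid: "e \<in> pedges lam m \<Longrightarrow> 1 \<le> t \<Longrightarrow> t < lam i \<Longrightarrow>
   incident lam e (Mid i t) \<longleftrightarrow> (e = (i, t) \<or> e = (i, t + 1))"
  by (cases e) (auto simp: incident_def end1_def end2_def vtx_def pedges_def)

lemma full_paths_insert: "full_paths (insert i F) = full_paths F \<union> segment i 1 (lam i)"
  unfolding full_paths_def segment_def by auto

lemma in_pedges:
  "i < 2 * m \<Longrightarrow> 1 \<le> j \<Longrightarrow> j \<le> lam i \<Longrightarrow> (i, j) \<in> pedges lam m"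
  unfolding pedges_def by auto

lemma open_edges_endpoint:
  assumes F: "F \<subseteq> {..<2*m}" and v: "v \<in> {VO, VD}"
  shows "open_edges lam m (v, full_paths F) = end_edge v ` ({..<2*m} - F)"
proof
  show "open_edges lam m (v, full_paths F) \<subseteq> end_edge v ` ({..<2*m} - F)"
  proof
    fix e assume e: "e \<in> open_edges lam m (v, full_paths F)"
    obtain i j where ij: "e = (i, j)" by (cases e)
    from e have ep: "e \<in> pedges lam m" and nt: "e \<notin> full_paths F" and inc: "incident lam e v"
      unfolding open_edges_def by auto
    from ep have i: "i < 2*m" "1 \<le> j" "j \<le> lam i" unfolding ij pedges_def by auto
    from nt i have "i \<notin> F" unfolding ij full_paths_def by auto
    moreover have "e = end_edge v i"
      using v inc incident_VO[OF ep] incident_VD[OF ep] unfolding ij end_edge_def by auto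
    ultimately show "e \<in> end_edge v ` ({..<2*m} - F)" using i by auto
  qed
next
  show "end_edge v ` ({..<2*m} - F) \<subseteq> open_edges lam m (v, full_paths F)"
  proof
    fix e assume "e \<in> end_edge v ` ({..<2*m} - F)"
    then obtain i where i: "i < 2*m" "i \<notin> F" and e: "e = end_edge v i" by auto
    have l: "lam i > 0" using lam_pos i by auto
    have ep: "e \<in> pedges lam m" using i l unfolding e end_edge_def pedges_def by auto
    moreover have "e \<notin> full_paths F" using i unfolding e end_edge_def full_paths_def by auto
    moreover have "incident lam e v"
      using v incident_VO[OF ep] incident_VD[OF ep] unfolding e end_edge_def by auto
    ultimately show "e \<in> open_edges lam m (v, full_paths F)" unfolding open_edges_def by auto
  qed
qed

lemma inj_on_end_edge: "inj_on (end_edge v) A" unfolding end_edge_def inj_on_def by auto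

lemma traverse_VO:
  assumes "i < 2*m"
  shows "traverse lam (VO, full_paths F) (end_edge VO i) = (vtx lam i 1, insert (i, 1) (full_paths F))"
  unfolding traverse_def end_edge_def other_end_def end1_def end2_def by (simp add: vtx_def)

lemma traverse_VD:
  assumes "i < 2*m"
  shows "traverse lam (VD, full_paths F) (end_edge VD i) = (vtx lam i (lam i - 1), insert (i, lam i) (full_paths F))"
proof -
  have "vtx lam i (lam i - 1) \<noteq> VD" unfolding vtx_def by (cases "lam i") auto
  thus ?thesis unfolding traverse_def end_edge_def other_end_def end1_def end2_def by auto
qed

lemma open_edges_from_VO:
  assumes i: "i < 2*m" "i \<notin> F" and t: "1 \<le> t" "t < lam i"
  shows "open_edges lam m (Mid i t, full_paths F \<union> segment i 1 t) = {(i, t + 1)}"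
  unfolding open_edges_def using i t incident_Mid[OF _ t] in_pedges[of i "t+1" ] in_pedges[of i t]
  by (auto simp: full_paths_def segment_def)

lemma traverse_Mid_from_VO:
  assumes i: "i < 2*m" and t: "1 \<le> t" "t < lam i"
  shows "traverse lam (Mid i t, full_paths F \<union> segment i 1 t) (i, t + 1)
      = (vtx lam i (t + 1), full_paths F \<union> segment i 1 (t + 1))"
proof -
  have "vtx lam i t = Mid i t" using t by (simp add: vtx_def)
  moreover have "insert (i, t+1) (full_paths F \<union> segment i 1 t) = full_paths F \<union> segment i 1 (t + 1)"
    by (auto simp: segment_def)
  ultimately show ?thesis unfolding traverse_def other_end_def end1_def end2_def by simp
qed

lemma open_edges_from_VD:
  assumes i: "i < 2*m" "i \<notin> F" and t: "1 \<le> t" "t < lam i"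
  shows "open_edges lam m (Mid i t, full_paths F \<union> segment i (t + 1) (lam i)) = {(i, t)}"
  unfolding open_edges_def using i t incident_Mid[OF _ t] in_pedges[of i "t+1" ] in_pedges[of i t]
  by (auto simp: full_paths_def segment_def)

lemma traverse_Mid_from_VD:
  assumes i: "i < 2*m" and t: "1 \<le> t" "t < lam i"
  shows "traverse lam (Mid i t, full_paths F \<union> segment i (t + 1) (lam i)) (i, t)
      = (vtx lam i (t - 1), full_paths F \<union> segment i t (lam i))"
proof -
  have "vtx lam i t = Mid i t" using t by (simp add: vtx_def)
  moreover have "vtx lam i (t - 1) \<noteq> Mid i t" unfolding vtx_def by (cases t) auto
  moreover have "insert (i, t) (full_paths F \<union> segment i (t + 1) (lam i)) = full_paths F \<union> segment i t (lam i)"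
    using t by (auto simp: segment_def)
  ultimately show ?thesis unfolding traverse_def other_end_def end1_def end2_def by auto
qed

lemma traverse_endpoint:
  assumes i: "i < 2*m" and v: "v \<in> {VO, VD}"
  shows "traverse lam (v, full_paths F) (end_edge v i) = (if lam i = 1 then (opposite v, full_paths (insert i F))
     else if v = VO then (Mid i 1, full_paths F \<union> segment i 1 1)
     else (Mid i (lam i - 1), full_paths F \<union> segment i (lam i - 1 + 1) (lam i)))"
proof -
  have l: "lam i > 0" using lam_pos i by auto
  show ?thesis
  proof (cases "v = VO")
    case True
    then show ?thesis using traverse_VO[OF i, of F] l
      unfolding full_paths_insert by (auto simp: vtx_def segment_def opposite_def)
  next
    case False
    hence "v = VD" using v by auto
    then show ?thesis using traverse_VD[OF i, of F] l
      unfolding full_paths_insert by (auto simp: vtx_def segment_def opposite_def)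
  qed
qed

lemma traverse_from_VO:
  assumes i: "i < 2*m" and t: "1 \<le> t" "t < lam i"
  shows "traverse lam (Mid i t, full_paths F \<union> segment i 1 t) (i, t + 1)
      = (if t + 1 = lam i then (VD, full_paths (insert i F))
     else (Mid i (t+1), full_paths F \<union> segment i 1 (t+1)))"
  using traverse_Mid_from_VO[OF i t, of F] t unfolding full_paths_insert by (auto simp: vtx_def)

lemma traverse_from_VD:
  assumes i: "i < 2*m" and t: "1 \<le> t" "t < lam i"
  shows "traverse lam (Mid i t, full_paths F \<union> segment i (t + 1) (lam i)) (i, t)
      = (if t = 1 then (VO, full_paths (insert i F))
     else (Mid i (t - 1), full_paths F \<union> segment i (t - 1 + 1) (lam i)))"
  using traverse_Mid_from_VD[OF i t, of F] t unfolding full_paths_insert by (auto simp: vtx_def)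

lemma tour_state_endpoint:
  "F \<subseteq> {..<2*m} \<Longrightarrow> v \<in> {VO, VD} \<Longrightarrow> tour_state (v, full_paths F)"
  unfolding tour_state_def by blast

lemma tour_state_from_VO:
  "F \<subseteq> {..<2*m} \<Longrightarrow> i < 2*m \<Longrightarrow> i \<notin> F \<Longrightarrow> 1 \<le> t \<Longrightarrow> t < lam i \<Longrightarrow>
    tour_state (Mid i t, full_paths F \<union> segment i 1 t)"
  unfolding tour_state_def by blast

lemma tour_state_from_VD:
  "F \<subseteq> {..<2*m} \<Longrightarrow> i < 2*m \<Longrightarrow> i \<notin> F \<Longrightarrow> 1 \<le> t \<Longrightarrow> t < lam i \<Longrightarrow>
    tour_state (Mid i t, full_paths F \<union> segment i (t+1) (lam i))"
  unfolding tour_state_def by blast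

lemma tour_state_cases [consumes 1, case_names endpoint from_VO from_VD]:
  assumes "tour_state s"
  obtains F v where "F \<subseteq> {..<2*m}" "v \<in> {VO, VD}" "s = (v, full_paths F)"
  | F i t where "F \<subseteq> {..<2*m}" "i < 2*m" "i \<notin> F" "1 \<le> t" "t < lam i"
      "s = (Mid i t, full_paths F \<union> segment i 1 t)"
  | F i t where "F \<subseteq> {..<2*m}" "i < 2*m" "i \<notin> F" "1 \<le> t" "t < lam i"
      "s = (Mid i t, full_paths F \<union> segment i (t + 1) (lam i))"
  using assms unfolding tour_state_def by blast

lemma tour_state_traverse:
  assumes "tour_state s" and e: "e \<in> open_edges lam m s"
  shows "tour_state (traverse lam s e)"
  using assms(1)
proof (cases rule: tour_state_cases)
  case (endpoint F v)
  from e obtain i where i: "i < 2*m" "i \<notin> F" and e: "e = end_edge v i"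
    unfolding endpoint(3) open_edges_endpoint[OF endpoint(1,2)] by auto
  have "insert i F \<subseteq> {..<2*m}" "lam i - 1 + 1 = lam i"
    using endpoint(1) i lam_pos[OF i(1)] by auto
  then show ?thesis
    using traverse_endpoint[OF i(1) endpoint(2), of F] tour_state_endpoint[of "insert i F"]
      tour_state_from_VO[OF endpoint(1) i, of 1] tour_state_from_VD[OF endpoint(1) i, of "lam i - 1"]
      lam_pos[OF i(1)]
    by (auto simp: endpoint(3) e opposite_def)
next
  case (from_VO F i t)
  have "e = (i, t + 1)"
    using e unfolding from_VO(6) open_edges_from_VO[OF from_VO(2-5)] by simp
  moreover have "insert i F \<subseteq> {..<2*m}"
    using from_VO by auto
  ultimately show ?thesis
    using traverse_from_VO[OF from_VO(2,4,5), of F] tour_state_endpoint[of "insert i F"]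
      tour_state_from_VO[OF from_VO(1-3), of "t + 1"] from_VO(4,5)
    by (auto simp: from_VO(6))
next
  case (from_VD F i t)
  have "e = (i, t)"
    using e unfolding from_VD(6) open_edges_from_VD[OF from_VD(2-5)] by simp
  moreover have "insert i F \<subseteq> {..<2*m}"
    using from_VD by auto
  ultimately show ?thesis
    using traverse_from_VD[OF from_VD(2,4,5), of F] tour_state_endpoint[of "insert i F"]
      tour_state_from_VD[OF from_VD(1-3), of "t - 1"] from_VD(4,5)
    by (auto simp: from_VD(6))
qed

lemma tour_state_reduced_step:
  assumes "tour_state s" and "s' \<in> set_pmf (reduced_step lam m p s)"
  shows "tour_state s'"
  using assms set_pmf_reduced_step[of lam m p s] tour_state_traverse by blast

lemma finite_tour_states: "finite {s. tour_state s}"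
proof (rule finite_subset)
  show "{s. tour_state s} \<subseteq> ({VO, VD} \<union> case_prod Mid ` (SIGMA i:{..<2*m}. {..<lam i})) \<times> Pow (pedges lam m)"
  proof
    fix s assume "s \<in> {s. tour_state s}"
    then have "tour_state s"
      by simp
    have full: "full_paths F \<subseteq> pedges lam m" if "F \<subseteq> {..<2*m}" for F
      using that unfolding full_paths_def pedges_def by auto
    have seg: "segment i a b \<subseteq> pedges lam m" if "i < 2*m" "1 \<le> a" "b \<le> lam i" for i a b
      using that unfolding segment_def pedges_def by auto
    have mid: "Mid i t \<in> case_prod Mid ` (SIGMA i:{..<2*m}. {..<lam i})" if "i < 2*m" "t < lam i" for i t
      using that by force
    from \<open>tour_state s\<close> show "s \<in> ({VO, VD} \<union> case_prod Mid ` (SIGMA i:{..<2*m}. {..<lam i})) \<times> Pow (pedges lam m)"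
    proof (cases rule: tour_state_cases)
      case (endpoint F v)
      then show ?thesis using full by auto
    next
      case (from_VO F i t)
      then show ?thesis using full seg[of i 1 t] mid[of i t] by auto
    next
      case (from_VD F i t)
      then show ?thesis using full seg[of i "t + 1" "lam i"] mid[of i t] by auto
    qed
  qed
qed (auto simp: finite_pedges)

end

section \<open>The potential for a fixed hidden edge\<close>

text \<open>
  Probability that the target path, among \<open>k\<close> untraversed paths taken in uniformly random order
  alternately from the two endpoints, is entered from the current endpoint.
\<close>
definition same_side_prob :: "nat \<Rightarrow> real" where
  "same_side_prob k = real ((k + 1) div 2) / real k"

locale target_edge = parallel_graph +
  fixes p :: real and i0 j0 :: nat
  assumes p_pos: "0 < p" and p_le_1: "p \<le> 1" and i0: "i0 < 2 * m" and j0: "1 \<le> j0" "j0 \<le> lam i0"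
begin

definition interior_time :: "nat \<Rightarrow> real" where "interior_time i = (real (lam i) - 1) / p"

text \<open>Time from entering the target path at \<open>v\<close> until its hidden edge is traversed.\<close>
definition target_offset :: "pvertex \<Rightarrow> real" where
  "target_offset v = (if v = VO then (real j0 - 1) / p else (real (lam i0) - real j0) / p)"

definition endpoint_time :: "pvertex \<Rightarrow> nat set \<Rightarrow> real" where
  "endpoint_time v U = endpoint_wait p (card U) + (\<Sum>i\<in>U - {i0}. interior_time i) / 2
     + same_side_prob (card U) * target_offset v + (1 - same_side_prob (card U)) * target_offset (opposite v)"

definition untouched_paths :: "edge set \<Rightarrow> nat set" where
  "untouched_paths T = {i. i < 2 * m \<and> (i, 1) \<notin> T \<and> (i, lam i) \<notin> T}"

text \<open>
  The potential: the expected remaining search time from a reachable state in which the hidden edge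
  is still untraversed.
\<close>
definition raw_time :: "rstate \<Rightarrow> real" where
  "raw_time s = (case fst s of
      VO \<Rightarrow> endpoint_time VO (untouched_paths (snd s))
    | VD \<Rightarrow> endpoint_time VD (untouched_paths (snd s))
    | Mid i t \<Rightarrow> (if (i, t) \<in> snd s then
          (if i = i0 then (real j0 - real t) / p
           else (real (lam i) - real t) / p + endpoint_time VD (untouched_paths (snd s)))
        else
          (if i = i0 then (real t + 1 - real j0) / p
           else real t / p + endpoint_time VO (untouched_paths (snd s)))))"

definition remaining_time :: "rstate \<Rightarrow> real" where
  "remaining_time s = (if (i0, j0) \<in> snd s then 0 else raw_time s)"

lemma endpoint_time_recursion:
  assumes fin: "finite U" and iU: "i0 \<in> U" and v: "v \<in> {VO, VD}"
  shows "endpoint_time v U = 1 / (1 - (1 - p) ^ card U)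
     + (target_offset v + (\<Sum>i\<in>U - {i0}. interior_time i + endpoint_time (opposite v) (U - {i}))) / real (card U)"
proof -
  define k where "k = card U"
  define S where "S = (\<Sum>i\<in>U - {i0}. interior_time i)"
  have k1: "k \<ge> 1"
    using fin iU unfolding k_def by (metis One_nat_def Suc_leI card_gt_0_iff empty_iff)
  obtain k' where k': "k = Suc k'" using k1 by (cases k) auto
  have ov: "opposite (opposite v) = v" using v by (auto simp: opposite_def)
  define C where "C = same_side_prob k' * target_offset (opposite v) + (1 - same_side_prob k') * target_offset v"
  have after_path: "endpoint_time (opposite v) (U - {i}) = endpoint_wait p k' + (S - interior_time i) / 2 + C" if i: "i \<in> U - {i0}" for i
  proof -
    have "card (U - {i}) = k'" using i fin k' unfolding k_def by simp
    moreover have "(\<Sum>j\<in>(U - {i}) - {i0}. interior_time j) = S - interior_time i"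
    proof -
      have "(U - {i}) - {i0} = (U - {i0}) - {i}" by auto
      thus ?thesis unfolding S_def using i fin by (simp add: sum_diff1)
    qed
    ultimately show ?thesis unfolding endpoint_time_def C_def ov by simp
  qed
  have cU: "card (U - {i0}) = k'" using iU fin k' unfolding k_def by simp
  have sumeq: "(\<Sum>i\<in>U - {i0}. interior_time i + endpoint_time (opposite v) (U - {i}))
      = S + real k' * (endpoint_wait p k' + C) + (real k' * S - S) / 2"
  proof -
    have "(\<Sum>i\<in>U - {i0}. interior_time i + endpoint_time (opposite v) (U - {i})) = (\<Sum>i\<in>U - {i0}. interior_time i / 2 + (S / 2 + endpoint_wait p k' + C))"
      by (rule sum.cong) (auto simp: after_path field_simps)
    also have "\<dots> = S / 2 + real k' * (S / 2 + endpoint_wait p k' + C)"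
      using cU unfolding S_def by (simp add: sum.distrib sum_divide_distrib)
    finally show ?thesis by (simp add: field_simps)
  qed
  have same_side: "real k * same_side_prob k = real ((k + 1) div 2)"
    using k1 unfolding same_side_prob_def by simp
  have same_side_pred: "real k' * same_side_prob k' = real (k div 2)"
    unfolding same_side_prob_def k' by (cases k') auto
  have halves: "real ((k + 1) div 2) + real (k div 2) = real k"
  proof -
    have "(k + 1) div 2 + k div 2 = k" by presburger
    thus ?thesis by (metis of_nat_add)
  qed
  have wait_k: "endpoint_wait p k = 1 / (1 - (1 - p) ^ k) + real k' / real k * endpoint_wait p k'"
    unfolding k' by simp
  have kpos: "real k > 0" using k1 by simp
  have "endpoint_time v U = endpoint_wait p k + S / 2 + same_side_prob k * target_offset v + (1 - same_side_prob k) * target_offset (opposite v)"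
    unfolding endpoint_time_def k_def S_def by simp
  also have "\<dots> = 1 / (1 - (1 - p) ^ k) + (target_offset v + (S + real k' * (endpoint_wait p k' + C) + (real k' * S - S) / 2)) / real k"
  proof -
    have e1: "real k = real k' + 1" unfolding k' by simp
    have "real k * (same_side_prob k * target_offset v + (1 - same_side_prob k) * target_offset (opposite v))
        = target_offset v + real k' * C"
    proof -
      have "real k * (same_side_prob k * target_offset v + (1 - same_side_prob k) * target_offset (opposite v))
          = (real k * same_side_prob k) * target_offset v + (real k - real k * same_side_prob k) * target_offset (opposite v)"
        by (simp add: algebra_simps)
      also have "\<dots> = real ((k + 1) div 2) * target_offset v + (real k - real ((k + 1) div 2)) * target_offset (opposite v)"
        by (simp only: same_side)
      also have "\<dots> = real ((k + 1) div 2) * target_offset v + real (k div 2) * target_offset (opposite v)"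
        using halves by simp
      also have "real k' * C = real (k div 2) * target_offset (opposite v) + (real k' - real (k div 2)) * target_offset v"
      proof -
        have "real k' * C = (real k' * same_side_prob k') * target_offset (opposite v) + (real k' - real k' * same_side_prob k') * target_offset v"
          unfolding C_def by (simp add: algebra_simps)
        thus ?thesis by (simp only: same_side_pred)
      qed
      moreover have "real k' - real (k div 2) = real ((k + 1) div 2) - 1" using halves e1 by simp
      ultimately show ?thesis by (simp add: algebra_simps)
    qed
    then show ?thesis unfolding wait_k using kpos e1 by (simp add: field_simps)
  qed
  finally show ?thesis unfolding sumeq k_def .
qed

lemma untouched_paths_endpoint:
  "F \<subseteq> {..<2*m} \<Longrightarrow> untouched_paths (full_paths F) = {..<2*m} - F"
  unfolding untouched_paths_def full_paths_def using lam_pos by fastforce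

lemma untouched_paths_from_VO:
  "F \<subseteq> {..<2*m} \<Longrightarrow> 1 \<le> t \<Longrightarrow> untouched_paths (full_paths F \<union> segment i 1 t) = {..<2*m} - F - {i}"
  unfolding untouched_paths_def full_paths_def segment_def using lam_pos by fastforce

lemma untouched_paths_from_VD:
  "F \<subseteq> {..<2*m} \<Longrightarrow> t < lam i \<Longrightarrow> untouched_paths (full_paths F \<union> segment i (t+1) (lam i)) = {..<2*m} - F - {i}"
  unfolding untouched_paths_def full_paths_def segment_def using lam_pos by fastforce

lemma target_in_full_paths: "(i0, j0) \<in> full_paths F \<longleftrightarrow> i0 \<in> F"
  unfolding full_paths_def using j0 by auto

lemma target_in_segment: "(i0, j0) \<in> segment i a b \<longleftrightarrow> i = i0 \<and> a \<le> j0 \<and> j0 \<le> b"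
  unfolding segment_def by auto

lemma raw_time_endpoint:
  "F \<subseteq> {..<2*m} \<Longrightarrow> v \<in> {VO, VD} \<Longrightarrow> raw_time (v, full_paths F) = endpoint_time v ({..<2*m} - F)"
  unfolding raw_time_def using untouched_paths_endpoint by auto

lemma raw_time_from_VO: "F \<subseteq> {..<2*m} \<Longrightarrow> 1 \<le> t \<Longrightarrow>
  raw_time (Mid i t, full_paths F \<union> segment i 1 t) = (if i = i0 then (real j0 - real t) / p
     else (real (lam i) - real t) / p + endpoint_time VD ({..<2*m} - F - {i}))"
  unfolding raw_time_def using untouched_paths_from_VO[of F t i] by (auto simp: segment_def)

lemma raw_time_from_VD: "F \<subseteq> {..<2*m} \<Longrightarrow> i \<notin> F \<Longrightarrow> t < lam i \<Longrightarrow>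
  raw_time (Mid i t, full_paths F \<union> segment i (t+1) (lam i)) = (if i = i0 then (real t + 1 - real j0) / p
     else real t / p + endpoint_time VO ({..<2*m} - F - {i}))"
  unfolding raw_time_def using untouched_paths_from_VD[of F t i]
  by (auto simp: segment_def full_paths_def)

lemma remaining_time_traverse_endpoint:
  assumes F: "F \<subseteq> {..<2*m}" and i: "i < 2*m" "i \<notin> F" and i0F: "i0 \<notin> F" and v: "v \<in> {VO, VD}"
  shows "remaining_time (traverse lam (v, full_paths F) (end_edge v i))
      = (if i = i0 then target_offset v else interior_time i + endpoint_time (opposite v) ({..<2*m} - F - {i}))"
proof -
  have FI: "insert i F \<subseteq> {..<2*m}" using F i by auto
  have l: "lam i \<ge> 1" using lam_pos[OF i(1)] by simp
  have ov: "opposite v \<in> {VO, VD}" by (auto simp: opposite_def)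
  have rest_paths: "{..<2*m} - insert i F = {..<2*m} - F - {i}" by auto
  show ?thesis
  proof (cases "i = i0")
    case True
    show ?thesis
    proof (cases "lam i = 1")
      case True
      hence single_edge: "j0 = 1" "lam i0 = 1" using j0 \<open>i = i0\<close> by auto
      have "remaining_time (traverse lam (v, full_paths F) (end_edge v i)) = 0"
        using True traverse_endpoint[OF i(1) v, of F] \<open>i = i0\<close>
        by (simp add: remaining_time_def target_in_full_paths)
      moreover have "target_offset v = 0" unfolding target_offset_def using single_edge by simp
      ultimately show ?thesis using \<open>i = i0\<close> by simp
    next
      case False
      show ?thesis
      proof (cases "v = VO")
        case True
        then show ?thesis using \<open>i = i0\<close> False traverse_endpoint[OF i(1) v, of F] raw_time_from_VO[OF F, of 1 i]
          by (auto simp: remaining_time_def target_in_full_paths target_in_segment target_offset_def i0F)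
      next
        case False
        hence vD: "v = VD" using v by auto
        have "lam i - 1 + 1 = lam i" using l by simp
        then show ?thesis using \<open>i = i0\<close> \<open>lam i \<noteq> 1\<close> vD traverse_endpoint[OF i(1) v, of F] raw_time_from_VD[OF F i(2), of "lam i - 1"] l
          by (auto simp: remaining_time_def target_in_full_paths target_in_segment target_offset_def i0F)
      qed
    qed
  next
    case False
    show ?thesis
    proof (cases "lam i = 1")
      case True
      have "remaining_time (traverse lam (v, full_paths F) (end_edge v i)) = endpoint_time (opposite v) ({..<2*m} - F - {i})"
        using True traverse_endpoint[OF i(1) v, of F] raw_time_endpoint[OF FI ov] False i0F rest_paths
        by (simp add: remaining_time_def target_in_full_paths)
      thus ?thesis using True False by (simp add: interior_time_def)
    next
      case nl: False
      show ?thesis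
      proof (cases "v = VO")
        case True
        then show ?thesis using False nl traverse_endpoint[OF i(1) v, of F] raw_time_from_VO[OF F, of 1 i]
          by (auto simp: remaining_time_def target_in_full_paths target_in_segment interior_time_def i0F opposite_def)
      next
        case False
        hence vD: "v = VD" using v by auto
        have "lam i - 1 + 1 = lam i" using l by simp
        moreover have "real (lam i - 1) = real (lam i) - 1" using l by simp
        ultimately show ?thesis using \<open>i \<noteq> i0\<close> nl vD traverse_endpoint[OF i(1) v, of F] raw_time_from_VD[OF F i(2), of "lam i - 1"] l
          by (auto simp: remaining_time_def target_in_full_paths target_in_segment interior_time_def i0F opposite_def)
      qed
    qed
  qed
qed

lemma one_minus_power_pos: "0 < k \<Longrightarrow> 0 < 1 - (1 - p) ^ k"
  using p_pos p_le_1 by (simp add: power_less_one_iff)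

lemma drift_endpoint:
  assumes F: "F \<subseteq> {..<2*m}" and v: "v \<in> {VO, VD}" and e0: "(i0, j0) \<notin> full_paths F"
  shows "measure_pmf.expectation (reduced_step lam m p (v, full_paths F)) remaining_time
      = raw_time (v, full_paths F) - 1"
proof -
  define U where "U = {..<2*m} - F"
  have i0F: "i0 \<notin> F" using e0 target_in_full_paths by simp
  have iU: "i0 \<in> U" unfolding U_def using i0 i0F by simp
  have finU: "finite U" unfolding U_def by simp
  define k where "k = card U"
  have k1: "k \<ge> 1"
    unfolding k_def using iU finU by (metis One_nat_def Suc_leI card_gt_0_iff empty_iff)
  have open_eq: "open_edges lam m (v, full_paths F) = end_edge v ` U"
    unfolding U_def by (rule open_edges_endpoint[OF F v])
  have card_open: "card (open_edges lam m (v, full_paths F)) = k"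
    unfolding open_eq k_def by (rule card_image[OF inj_on_end_edge])
  have ne: "open_edges lam m (v, full_paths F) \<noteq> {}" using open_eq iU by auto
  define X where "X = target_offset v + (\<Sum>i\<in>U - {i0}. interior_time i + endpoint_time (opposite v) (U - {i}))"
  have remaining_eq: "remaining_time (v, full_paths F) = endpoint_time v U"
    unfolding remaining_time_def using e0 raw_time_endpoint[OF F v] U_def by simp
  have sum_next: "(\<Sum>e\<in>open_edges lam m (v, full_paths F). remaining_time (traverse lam (v, full_paths F) e)) = X"
  proof -
    have "(\<Sum>e\<in>open_edges lam m (v, full_paths F). remaining_time (traverse lam (v, full_paths F) e)) = (\<Sum>i\<in>U. remaining_time (traverse lam (v, full_paths F) (end_edge v i)))"
      unfolding open_eq by (rule sum.reindex[OF inj_on_end_edge, unfolded comp_def])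
    also have "\<dots> = (\<Sum>i\<in>U. if i = i0 then target_offset v else interior_time i + endpoint_time (opposite v) (U - {i}))"
      by (rule sum.cong[OF refl]) (use remaining_time_traverse_endpoint[OF F _ _ i0F v] in \<open>auto simp: U_def\<close>)
    also have "\<dots> = X"
      unfolding X_def using sum.remove[OF finU iU, of "\<lambda>i. if i = i0 then target_offset v else interior_time i + endpoint_time (opposite v) (U - {i})"]
      by simp
    finally show ?thesis .
  qed
  have recursion: "endpoint_time v U = 1 / (1 - (1 - p) ^ k) + X / real k"
    unfolding X_def k_def by (rule endpoint_time_recursion[OF finU iU v])
  have "measure_pmf.expectation (reduced_step lam m p (v, full_paths F)) remaining_time
     = (1 - p) ^ k * endpoint_time v U + (1 - (1 - p) ^ k) / real k * X"
    using expectation_reduced_step[of p lam m "(v, full_paths F)" remaining_time] p_pos p_le_1 ne unfolding card_open remaining_eq sum_next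
    by simp
  also have "\<dots> = (1 - p) ^ k * endpoint_time v U + (1 - (1 - p) ^ k) * (endpoint_time v U - 1 / (1 - (1 - p) ^ k))"
    using recursion by simp
  also have "\<dots> = endpoint_time v U - (1 - (1 - p) ^ k) * (1 / (1 - (1 - p) ^ k))"
    by (simp add: algebra_simps)
  also have "\<dots> = endpoint_time v U - 1" using one_minus_power_pos[of k] k1 by simp
  finally show ?thesis using raw_time_endpoint[OF F v] U_def by simp
qed

lemma expectation_reduced_step_single:
  assumes "open_edges lam m s = {e}"
  shows "measure_pmf.expectation (reduced_step lam m p s) remaining_time
      = (1 - p) * remaining_time s + p * remaining_time (traverse lam s e)"
  using expectation_reduced_step[of p lam m s remaining_time] p_pos p_le_1 assms by simp

lemma remaining_time_traverse_from_VO: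
  assumes F: "F \<subseteq> {..<2*m}" and i: "i < 2*m" "i \<notin> F" and t: "1 \<le> t" "t < lam i"
    and e0: "(i0, j0) \<notin> full_paths F \<union> segment i 1 t"
  defines s_def: "s \<equiv> (Mid i t, full_paths F \<union> segment i 1 t)"
  shows "p * remaining_time (traverse lam s (i, t + 1)) = p * raw_time s - 1"
proof -
  define W where "W = {..<2*m} - F - {i}"
  have i0F: "i0 \<notin> F" using e0 target_in_full_paths by simp
  have FI: "insert i F \<subseteq> {..<2*m}" using F i by auto
  have W': "{..<2*m} - insert i F = W" unfolding W_def by auto
  show ?thesis
  proof (cases "i = i0")
    case False
    have raw_eq: "raw_time s = (real (lam i) - real t) / p + endpoint_time VD W"
      unfolding s_def W_def using raw_time_from_VO[OF F t(1), of i] False by simp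
    show ?thesis
    proof (cases "t + 1 = lam i")
      case True
      have "remaining_time (traverse lam s (i, t + 1)) = endpoint_time VD W"
        unfolding s_def traverse_from_VO[OF i(1) t] using True raw_time_endpoint[OF FI, of VD] W' False i0F
        by (simp add: remaining_time_def target_in_full_paths)
      moreover have "real (lam i) - real t = 1" using True by linarith
      ultimately show ?thesis using raw_eq p_pos by (simp add: field_simps)
    next
      case nl: False
      have "remaining_time (traverse lam s (i, t + 1)) = (real (lam i) - real (t + 1)) / p + endpoint_time VD W"
        unfolding s_def traverse_from_VO[OF i(1) t] using nl raw_time_from_VO[OF F, of "t+1" i] False i0F W_def
        by (simp add: remaining_time_def target_in_full_paths target_in_segment)
      thus ?thesis using raw_eq p_pos by (simp add: field_simps)
    qed
  next
    case True
    have tj: "t < j0" using e0 True j0(1) by (auto simp: target_in_segment)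
    have raw_eq: "raw_time s = (real j0 - real t) / p"
      unfolding s_def using raw_time_from_VO[OF F t(1), of i] True by simp
    show ?thesis
    proof (cases "t + 1 = j0")
      case tj1: True
      have mem: "(i0, j0) \<in> snd (traverse lam s (i, t + 1))"
      proof (cases "t + 1 = lam i")
        case True
        thus ?thesis unfolding s_def traverse_from_VO[OF i(1) t] using \<open>i = i0\<close> by (simp add: target_in_full_paths)
      next
        case False
        have "1 \<le> j0 \<and> j0 \<le> t + 1" using tj1 j0 by simp
        thus ?thesis unfolding s_def traverse_from_VO[OF i(1) t] using False \<open>i = i0\<close> by (simp add: target_in_segment)
      qed
      have "remaining_time (traverse lam s (i, t + 1)) = 0"
        using mem by (simp add: remaining_time_def)
      moreover have "real j0 - real t = 1" using tj1 by linarith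
      ultimately show ?thesis using raw_eq p_pos by simp
    next
      case False
      have nl: "t + 1 \<noteq> lam i" using False tj j0 True by auto
      have "remaining_time (traverse lam s (i, t + 1)) = (real j0 - real (t + 1)) / p"
        unfolding s_def traverse_from_VO[OF i(1) t] using nl raw_time_from_VO[OF F, of "t+1" i] True i0F tj False
        by (simp add: remaining_time_def target_in_full_paths target_in_segment)
      thus ?thesis using raw_eq p_pos by (simp add: field_simps)
    qed
  qed
qed

lemma drift_from_VO:
  assumes F: "F \<subseteq> {..<2*m}" and i: "i < 2*m" "i \<notin> F" and t: "1 \<le> t" "t < lam i"
    and e0: "(i0, j0) \<notin> full_paths F \<union> segment i 1 t"
  shows "measure_pmf.expectation (reduced_step lam m p (Mid i t, full_paths F \<union> segment i 1 t)) remaining_time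
      = raw_time (Mid i t, full_paths F \<union> segment i 1 t) - 1"
  using expectation_reduced_step_single[OF open_edges_from_VO[OF i t]] remaining_time_traverse_from_VO[OF assms] e0 p_pos
  by (simp add: remaining_time_def field_simps)

lemma remaining_time_traverse_from_VD:
  assumes F: "F \<subseteq> {..<2*m}" and i: "i < 2*m" "i \<notin> F" and t: "1 \<le> t" "t < lam i"
    and e0: "(i0, j0) \<notin> full_paths F \<union> segment i (t + 1) (lam i)"
  defines s_def: "s \<equiv> (Mid i t, full_paths F \<union> segment i (t + 1) (lam i))"
  shows "p * remaining_time (traverse lam s (i, t)) = p * raw_time s - 1"
proof -
  define W where "W = {..<2*m} - F - {i}"
  have i0F: "i0 \<notin> F" using e0 target_in_full_paths by simp
  have FI: "insert i F \<subseteq> {..<2*m}" using F i by auto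
  have W': "{..<2*m} - insert i F = W" unfolding W_def by auto
  show ?thesis
  proof (cases "i = i0")
    case False
    have raw_eq: "raw_time s = real t / p + endpoint_time VO W"
      unfolding s_def W_def using raw_time_from_VD[OF F i(2) t(2)] False by simp
    show ?thesis
    proof (cases "t = 1")
      case True
      have "remaining_time (traverse lam s (i, t)) = endpoint_time VO W"
        unfolding s_def traverse_from_VD[OF i(1) t] using True raw_time_endpoint[OF FI, of VO] W' False i0F
        by (simp add: remaining_time_def target_in_full_paths)
      thus ?thesis using raw_eq p_pos True by (simp add: field_simps)
    next
      case t1: False
      have tt: "t - 1 + 1 = t" "t - 1 < lam i" using t t1 by auto
      have "remaining_time (traverse lam s (i, t)) = real (t - 1) / p + endpoint_time VO W"
        unfolding s_def traverse_from_VD[OF i(1) t] using t1 raw_time_from_VD[OF F i(2) tt(2)] tt False i0F W_def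
        by (simp add: remaining_time_def target_in_full_paths target_in_segment)
      moreover have "real (t - 1) = real t - 1" using t by simp
      ultimately show ?thesis using raw_eq p_pos by (simp add: field_simps)
    qed
  next
    case True
    have tj: "j0 \<le> t" using e0 True j0 by (auto simp: target_in_segment)
    have raw_eq: "raw_time s = (real t + 1 - real j0) / p"
      unfolding s_def using raw_time_from_VD[OF F i(2) t(2)] True by simp
    show ?thesis
    proof (cases "j0 = t")
      case tj1: True
      have mem: "(i0, j0) \<in> snd (traverse lam s (i, t))"
      proof (cases "t = 1")
        case True
        thus ?thesis unfolding s_def traverse_from_VD[OF i(1) t] using \<open>i = i0\<close> by (simp add: target_in_full_paths)
      next
        case False
        have "t - 1 + 1 \<le> j0 \<and> j0 \<le> lam i0" using tj1 j0 t by simp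
        thus ?thesis unfolding s_def traverse_from_VD[OF i(1) t] using False \<open>i = i0\<close> by (simp only: target_in_segment snd_conv if_False Un_iff) simp
      qed
      have "remaining_time (traverse lam s (i, t)) = 0" using mem by (simp add: remaining_time_def)
      thus ?thesis using raw_eq p_pos tj1 by simp
    next
      case False
      have t1: "t \<noteq> 1" using False tj j0 by auto
      have tt: "t - 1 + 1 = t" "t - 1 < lam i" using t t1 by auto
      have "remaining_time (traverse lam s (i, t)) = (real (t - 1) + 1 - real j0) / p"
        unfolding s_def traverse_from_VD[OF i(1) t] using t1 raw_time_from_VD[OF F i(2) tt(2)] tt True i0F tj False
        by (simp add: remaining_time_def target_in_full_paths target_in_segment)
      moreover have "real (t - 1) = real t - 1" using t by simp
      ultimately show ?thesis using raw_eq p_pos by (simp add: field_simps)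
    qed
  qed
qed

lemma drift_from_VD:
  assumes F: "F \<subseteq> {..<2*m}" and i: "i < 2*m" "i \<notin> F" and t: "1 \<le> t" "t < lam i"
    and e0: "(i0, j0) \<notin> full_paths F \<union> segment i (t + 1) (lam i)"
  shows "measure_pmf.expectation (reduced_step lam m p (Mid i t, full_paths F \<union> segment i (t + 1) (lam i))) remaining_time
      = raw_time (Mid i t, full_paths F \<union> segment i (t + 1) (lam i)) - 1"
  using expectation_reduced_step_single[OF open_edges_from_VD[OF i t]] remaining_time_traverse_from_VD[OF assms] e0 p_pos
  by (simp add: remaining_time_def field_simps)

lemma drift_remaining_time:
  assumes "tour_state s" and "(i0, j0) \<notin> snd s"
  shows "measure_pmf.expectation (reduced_step lam m p s) remaining_time = remaining_time s - 1"
proof -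
  have "measure_pmf.expectation (reduced_step lam m p s) remaining_time = raw_time s - 1"
    using assms(1)
  proof (cases rule: tour_state_cases)
    case (endpoint F v)
    then show ?thesis
      using drift_endpoint[OF endpoint(1,2)] assms(2) by simp
  next
    case (from_VO F i t)
    then show ?thesis
      using drift_from_VO[OF from_VO(1-5)] assms(2) by simp
  next
    case (from_VD F i t)
    then show ?thesis
      using drift_from_VD[OF from_VD(1-5)] assms(2) by simp
  qed
  then show ?thesis
    using assms(2) by (simp add: remaining_time_def)
qed

lemma reduced_step_traversed_mono:
  "s' \<in> set_pmf (reduced_step lam m p s) \<Longrightarrow> snd s \<subseteq> snd s'"
  using set_pmf_reduced_step[of lam m p s] by (auto simp: traverse_def)

lemma expectation_reduced_step_done:
  assumes "(i0, j0) \<in> snd s"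
  shows "measure_pmf.expectation (reduced_step lam m p s) remaining_time = 0"
proof -
  have "measure_pmf.expectation (reduced_step lam m p s) remaining_time = measure_pmf.expectation (reduced_step lam m p s) (\<lambda>_. 0)"
  proof (rule integral_cong_AE)
    show "AE x in measure_pmf (reduced_step lam m p s). remaining_time x = 0"
    proof (subst AE_measure_pmf_iff, intro ballI)
      fix x assume "x \<in> set_pmf (reduced_step lam m p s)"
      hence "(i0, j0) \<in> snd x" using reduced_step_traversed_mono assms by blast
      thus "remaining_time x = 0" by (simp add: remaining_time_def)
    qed
  qed auto
  thus ?thesis by simp
qed

lemma endpoint_wait_nonneg: "0 \<le> endpoint_wait p k"
proof (induction k)
  case (Suc k)
  have "(1 - p) ^ Suc k \<le> 1" by (rule power_le_one) (use p_pos p_le_1 in auto)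
  hence "0 \<le> 1 / (1 - (1 - p) ^ Suc k)" by simp
  thus ?case using Suc by simp
qed simp

lemma same_side_prob_bounds: "0 \<le> same_side_prob k" "same_side_prob k \<le> 1"
  unfolding same_side_prob_def by (auto simp: divide_le_eq_1)

lemma target_offset_nonneg: "0 \<le> target_offset v"
  unfolding target_offset_def using j0 p_pos by auto

lemma interior_time_nonneg: "i < 2 * m \<Longrightarrow> 0 \<le> interior_time i"
  unfolding interior_time_def using lam_pos[of i] p_pos by auto

lemma endpoint_time_nonneg: "U \<subseteq> {..<2*m} \<Longrightarrow> 0 \<le> endpoint_time v U"
proof -
  assume U: "U \<subseteq> {..<2*m}"
  have "0 \<le> (\<Sum>i\<in>U - {i0}. interior_time i)"
    using U interior_time_nonneg by (intro sum_nonneg) auto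
  moreover have "0 \<le> same_side_prob (card U) * target_offset v"
    using same_side_prob_bounds target_offset_nonneg by simp
  moreover have "0 \<le> (1 - same_side_prob (card U)) * target_offset (opposite v)"
    using same_side_prob_bounds target_offset_nonneg by simp
  ultimately show ?thesis unfolding endpoint_time_def using endpoint_wait_nonneg by simp
qed

lemma remaining_time_nonneg:
  assumes "tour_state s"
  shows "0 \<le> remaining_time s"
proof (cases "(i0, j0) \<in> snd s")
  case False
  have W: "{..<2*m} - F - {i} \<subseteq> {..<2*m}" for F i
    by auto
  from assms have "0 \<le> raw_time s"
  proof (cases rule: tour_state_cases)
    case (endpoint F v)
    then show ?thesis using raw_time_endpoint endpoint_time_nonneg by auto
  next
    case (from_VO F i t)
    moreover have "i = i0 \<Longrightarrow> t < j0"
      using False j0 from_VO(6) by (auto simp: target_in_segment)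
    ultimately show ?thesis
      using raw_time_from_VO[OF from_VO(1,4), of i] p_pos endpoint_time_nonneg[OF W] by auto
  next
    case (from_VD F i t)
    moreover have "i = i0 \<Longrightarrow> j0 \<le> t"
      using False j0 from_VD(6) by (auto simp: target_in_segment)
    ultimately show ?thesis
      using raw_time_from_VD[OF from_VD(1,3,5)] p_pos endpoint_time_nonneg[OF W] by auto
  qed
  with False show ?thesis
    by (simp add: remaining_time_def)
qed (simp add: remaining_time_def)

lemma expectation_remaining_time:
  assumes "tour_state s"
  shows "measure_pmf.expectation (reduced_step lam m p s) remaining_time
    = remaining_time s - indicator {s. (i0, j0) \<notin> snd s} s"
  using drift_remaining_time[OF assms] expectation_reduced_step_done
  by (cases "(i0, j0) \<in> snd s") (auto simp: remaining_time_def)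

lemma nn_integral_stage_remaining_time:
  assumes c: "tour_state (reduce c)"
  shows "(\<integral>\<^sup>+x. ennreal (remaining_time (reduce x)) \<partial>stage lam m p (uniform_eulerian lam m) c)
      + indicator {c. (i0, j0) \<notin> fst (snd c)} c = ennreal (remaining_time (reduce c))"
proof -
  have nonneg: "AE s in reduced_step lam m p (reduce c). 0 \<le> remaining_time s"
    using c tour_state_reduced_step remaining_time_nonneg by (auto simp: AE_measure_pmf_iff)
  have "(\<integral>\<^sup>+x. ennreal (remaining_time (reduce x)) \<partial>stage lam m p (uniform_eulerian lam m) c)
      = (\<integral>\<^sup>+s. ennreal (remaining_time s) \<partial>reduced_step lam m p (reduce c))"
    by (simp flip: map_pmf_reduce_stage)
  also have "\<dots> = ennreal (measure_pmf.expectation (reduced_step lam m p (reduce c)) remaining_time)"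
    using nonneg
    by (intro nn_integral_eq_integral)
      (auto intro: integrable_measure_pmf_finite finite_set_pmf_reduced_step)
  finally have nn_eq:
    "(\<integral>\<^sup>+x. ennreal (remaining_time (reduce x)) \<partial>stage lam m p (uniform_eulerian lam m) c)
      = ennreal (measure_pmf.expectation (reduced_step lam m p (reduce c)) remaining_time)" .
  have drift: "measure_pmf.expectation (reduced_step lam m p (reduce c)) remaining_time
      = remaining_time (reduce c) - indicator {c. (i0, j0) \<notin> fst (snd c)} c"
    using c by (simp add: expectation_remaining_time reduce_def indicator_def)
  have E_nonneg: "0 \<le> measure_pmf.expectation (reduced_step lam m p (reduce c)) remaining_time"
    by (rule integral_nonneg_AE[OF nonneg])
  show ?thesis
  proof (cases "(i0, j0) \<in> fst (snd c)")
    case False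
    then have "0 \<le> remaining_time (reduce c) - 1"
      using E_nonneg drift by simp
    then show ?thesis
      using False unfolding nn_eq drift by (simp flip: ennreal_1 ennreal_plus)
  next
    case True
    then show ?thesis
      unfolding nn_eq drift by simp
  qed
qed

lemma search_time_eq_remaining_time:
  "search_time lam m p (uniform_eulerian lam m) (i0, j0) = ennreal (remaining_time (VO, {}))"
proof -
  define P where "P = {c :: config. (i0, j0) \<notin> fst (snd c)}"
  define f where "f c = ennreal (remaining_time (reduce c))" for c
  define B where "B = Max (remaining_time ` {s. tour_state s})"
  have le_B: "remaining_time s \<le> B" if "tour_state s" for s
    unfolding B_def using finite_tour_states that by (intro Max_ge) auto
  have "(\<Sum>t. emeasure (config_dist lam m p (uniform_eulerian lam m) t) P)
      = (\<integral>\<^sup>+c. f c \<partial>return_pmf (VO, {}, []))"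
    unfolding config_dist_def
  proof (rule suminf_emeasure_iterate_bind_eq_potential[where S = "{c. tour_state (reduce c)}" and B = B])
    fix c assume c: "c \<in> {c. tour_state (reduce c)}"
    have support: "set_pmf (reduced_step lam m p (reduce c))
        = reduce ` set_pmf (stage lam m p (uniform_eulerian lam m) c)"
      by (simp flip: map_pmf_reduce_stage)
    show "set_pmf (stage lam m p (uniform_eulerian lam m) c) \<subseteq> {c. tour_state (reduce c)}"
      using c support tour_state_reduced_step by blast
    show "(\<integral>\<^sup>+x. f x \<partial>stage lam m p (uniform_eulerian lam m) c) + indicator P c = f c"
      using c nn_integral_stage_remaining_time unfolding f_def P_def by simp
    show "f c \<le> ennreal B * indicator P c"
      using c le_B[of "reduce c"]
      by (cases "c \<in> P") (auto simp: f_def P_def reduce_def remaining_time_def intro: ennreal_leI)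
  qed (simp add: reduce_def tour_state_endpoint[of "{}" VO, simplified full_paths_def, simplified])
  then show ?thesis
    by (simp add: search_time_def P_def f_def reduce_def measure_pmf.emeasure_eq_measure)
qed

lemma remaining_time_start: "remaining_time (VO, {}) = (theta lam m p + 1 / p) / 2 + Phi p m"
proof -
  obtain n where n: "m = Suc n"
    using i0 by (cases m) auto
  have pv: "same_side_prob (2 * m) = 1 / 2"
    unfolding same_side_prob_def n by simp
  have "remaining_time (VO, {}) = endpoint_time VO {..<2*m}"
    using raw_time_endpoint[of "{}" VO] by (simp add: remaining_time_def full_paths_def)
  also have "\<dots> = endpoint_wait p (2 * m) + (\<Sum>i<2*m. interior_time i) / 2"
  proof -
    have "(\<Sum>i\<in>{..<2*m} - {i0}. interior_time i) = (\<Sum>i<2*m. interior_time i) - interior_time i0"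
      using i0 by (simp add: sum_diff1)
    moreover have "target_offset VO + target_offset VD = interior_time i0"
      unfolding target_offset_def interior_time_def using p_pos by (simp add: field_simps)
    ultimately show ?thesis
      unfolding endpoint_time_def card_lessThan pv by (simp add: opposite_def field_simps)
  qed
  also have "\<dots> = (theta lam m p + 1 / p) / 2 + Phi p m"
  proof -
    have "theta lam m p = (\<Sum>k<2*m. 1 / (1 - (1 - p) ^ (k + 1))) + (\<Sum>i<2*m. interior_time i)"
      unfolding theta_def interior_time_def by (simp add: sum.distrib)
    then show ?thesis
      unfolding n endpoint_wait_eq_Phi by (simp add: field_simps)
  qed
  finally show ?thesis .
qed

end

theorem mainTheorem13:
  fixes lam :: "nat \<Rightarrow> nat" and m :: nat and p :: real
  assumes "m \<ge> 1" and "0 < p" and "p \<le> 1"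
    and "\<forall>i < 2 * m. lam i > 0"
  shows "(\<forall>e \<in> pedges lam m.
            search_time lam m p (uniform_eulerian lam m) e
              = ennreal ((theta lam m p + 1 / p) / 2 + Phi p m))
         \<and> game_val lam m p \<le> ennreal ((theta lam m p + 1 / p) / 2 + Phi p m)"
proof -
  have search_time: "search_time lam m p (uniform_eulerian lam m) e
      = ennreal ((theta lam m p + 1 / p) / 2 + Phi p m)" if e_edge: "e \<in> pedges lam m" for e
  proof -
    obtain i j where e: "e = (i, j)" and ij: "i < 2 * m" "1 \<le> j" "j \<le> lam i"
      using e_edge unfolding pedges_def by auto
    interpret target_edge lam m p i j
      using assms ij by unfold_locales auto
    show ?thesis
      unfolding e search_time_eq_remaining_time remaining_time_start ..
  qed
  have "(0, 1) \<in> pedges lam m"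
    using assms(1,4) unfolding pedges_def by (auto simp: Suc_le_eq)
  then have "pedges lam m \<noteq> {}"
    by blast
  moreover have "game_val lam m p \<le> (SUP e \<in> pedges lam m. search_time lam m p (uniform_eulerian lam m) e)"
    unfolding game_val_def by (rule INF_lower) simp
  ultimately show ?thesis
    using search_time by (auto simp: SUP_constant)
qed

end
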